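(* Let $L\ge1$, $d\ge1$, $c\in(0,1]$, and let $\sigma(t)=\max(t,0)$ (ReLU). Consider the bias-free network $h^{(0)}(x)=x\in\mathbb{R}^d$, $z^{(l)}_i(x)=\frac{1}{\sqrt{n_{l-1}}}\sum_jW^{(l)}_{ij}h^{(l-1)}_j(x)$, $h^{(l)}_i=\sigma(z^{(l)}_i)$ ($l=1,\dots,L$, $n_0=d$), scalar output $f(x)=\frac{1}{\sqrt{n_L}}\sum_jW^{(L+1)}_{1j}h^{(L)}_j(x)$, with independent weights $W^{(l)}_{ij}\sim\mathcal{N}(0,\mathcal{W}^{(l)}(i/n_l,j/n_{l-1}))$ where every graphon is constant, $\mathcal{W}^{(l)}(u,v)=c$ for all $l$ and all $(u,v)\in[0,1]^2$. Then the infinite-width limiting neural tangent kernel $\Theta$ of this network satisfies $$\Theta(x,x')=c^{L}\,\Theta_{\mathrm{std}}(x,x'),$$ where $\Theta_{\mathrm{std}}$ is the infinite-width limiting neural tangent kernel of the same fully connected architecture with all weights i.i.d. $\mathcal{N}(0,1)$ (i.e. constant graphons equal to $1$).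
   Context: The neural tangent kernel is $\Theta(x,x')=\nabla_\theta f(x)^\top\nabla_\theta f(x')$, the gradient taken with respect to all weights, and its infinite-width limit is taken as $n_1,\dots,n_L\to\infty$. A constant graphon models the infinite-width limit of masks produced by random pruning keeping each weight independently with probability $c$. *)

theory Defs
  imports "HOL-Probability.Probability"
begin

text \<open>Weights are indexed by triples (l, i, j): layer l in 1..L+1, row i in 1..n_l,
  column j in 1..n_(l-1). Neurons are indexed from 1.\<close>

definition relu :: "real \<Rightarrow> real" where
  "relu t = max t 0"

text \<open>Derivative of ReLU used in backpropagation (convention sigma'(0) = 0; the
  non-differentiability set has measure zero).\<close>
definition relu_deriv :: "real \<Rightarrow> real" where
  "relu_deriv t = (if t > 0 then 1 else 0)"

definition net_width :: "nat \<Rightarrow> nat \<Rightarrow> (nat \<Rightarrow> nat) \<Rightarrow> nat \<Rightarrow> nat" where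
  "net_width d L ns l = (if l = 0 then d else if l \<le> L then ns l else 1)"

fun hid :: "(nat \<times> nat \<times> nat \<Rightarrow> real) \<Rightarrow> (nat \<Rightarrow> nat) \<Rightarrow> nat \<Rightarrow> (nat \<Rightarrow> real) \<Rightarrow> nat \<Rightarrow> real" where
  "hid W n 0 x = x"
| "hid W n (Suc l) x = (\<lambda>i. relu ((1 / sqrt (real (n l))) *
      (\<Sum>j=1..n l. W (Suc l, i, j) * hid W n l x j)))"

definition preact :: "(nat \<times> nat \<times> nat \<Rightarrow> real) \<Rightarrow> (nat \<Rightarrow> nat) \<Rightarrow> nat \<Rightarrow> (nat \<Rightarrow> real) \<Rightarrow> nat \<Rightarrow> real" where
  "preact W n l x i = (1 / sqrt (real (n (l - 1)))) *
      (\<Sum>j=1..n (l - 1). W (l, i, j) * hid W n (l - 1) x j)"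

definition net_out :: "(nat \<times> nat \<times> nat \<Rightarrow> real) \<Rightarrow> (nat \<Rightarrow> nat) \<Rightarrow> nat \<Rightarrow> (nat \<Rightarrow> real) \<Rightarrow> real" where
  "net_out W n L x = preact W n (L + 1) x 1"

text \<open>Backpropagated errors: bp W n L k x i = df/dz^(L+1-k)_i (x).\<close>
fun bp :: "(nat \<times> nat \<times> nat \<Rightarrow> real) \<Rightarrow> (nat \<Rightarrow> nat) \<Rightarrow> nat \<Rightarrow> nat \<Rightarrow> (nat \<Rightarrow> real) \<Rightarrow> nat \<Rightarrow> real" where
  "bp W n L 0 x = (\<lambda>i. 1)"
| "bp W n L (Suc k) x = (\<lambda>i. relu_deriv (preact W n (L - k) x i) *
      (\<Sum>m=1..n (L + 1 - k). bp W n L k x m * W (L + 1 - k, m, i) / sqrt (real (n (L - k)))))"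

definition grad_w :: "(nat \<times> nat \<times> nat \<Rightarrow> real) \<Rightarrow> (nat \<Rightarrow> nat) \<Rightarrow> nat \<Rightarrow> (nat \<Rightarrow> real) \<Rightarrow> nat \<times> nat \<times> nat \<Rightarrow> real" where
  "grad_w W n L x = (\<lambda>(l, i, j). bp W n L (L + 1 - l) x i * hid W n (l - 1) x j / sqrt (real (n (l - 1))))"

definition weight_index :: "(nat \<Rightarrow> nat) \<Rightarrow> nat \<Rightarrow> (nat \<times> nat \<times> nat) set" where
  "weight_index n L = {(l, i, j). 1 \<le> l \<and> l \<le> L + 1 \<and> 1 \<le> i \<and> i \<le> n l \<and> 1 \<le> j \<and> j \<le> n (l - 1)}"

definition ntk_fin :: "(nat \<times> nat \<times> nat \<Rightarrow> real) \<Rightarrow> (nat \<Rightarrow> nat) \<Rightarrow> nat \<Rightarrow> (nat \<Rightarrow> real) \<Rightarrow> (nat \<Rightarrow> real) \<Rightarrow> real" where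
  "ntk_fin W n L x x' = (\<Sum>p\<in>weight_index n L. grad_w W n L x p * grad_w W n L x' p)"

definition gauss :: "real \<Rightarrow> real measure" where
  "gauss v = (if v = 0 then return lborel 0 else density lborel (normal_density 0 (sqrt v)))"

definition weight_measure :: "(nat \<Rightarrow> real \<Rightarrow> real \<Rightarrow> real) \<Rightarrow> (nat \<Rightarrow> nat) \<Rightarrow> nat \<Rightarrow> (nat \<times> nat \<times> nat \<Rightarrow> real) measure" where
  "weight_measure G n L = PiM (weight_index n L)
      (\<lambda>(l, i, j). gauss (G l (real i / real (n l)) (real j / real (n (l - 1)))))"

definition width_filter :: "nat \<Rightarrow> (nat \<Rightarrow> nat) filter" where
  "width_filter L = (INF N. principal {ns. \<forall>l\<in>{1..L}. N \<le> ns l})"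

definition is_limiting_ntk :: "(nat \<Rightarrow> real \<Rightarrow> real \<Rightarrow> real) \<Rightarrow> nat \<Rightarrow> nat \<Rightarrow> ((nat \<Rightarrow> real) \<Rightarrow> (nat \<Rightarrow> real) \<Rightarrow> real) \<Rightarrow> bool" where
  "is_limiting_ntk G d L K \<longleftrightarrow>
     (\<forall>x x' \<epsilon>. \<epsilon> > 0 \<longrightarrow>
        ((\<lambda>ns. measure (weight_measure G (net_width d L ns) L)
            {W \<in> space (weight_measure G (net_width d L ns) L).
               \<bar>ntk_fin W (net_width d L ns) L x x' - K x x'\<bar> > \<epsilon>}) \<longlongrightarrow> 0) (width_filter L))"

end

theory Submission
  imports Defs
begin

text \<open>The law N(0, c) is the image of N(0, 1) under multiplication by s = sqrt c, and the
  bias-free ReLU network is positively homogeneous in its weights: scaling every weight by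
  s > 0 scales h^(l) by s^l and the error backpropagated k layers from the output by s^k, hence
  every component of the weight gradient by s^L and the empirical NTK by c^L. So the empirical
  NTK of the pruned network is distributed as c^L times the standard one, and the events
  |Theta - c^L K| > eps and |Theta_std - K| > eps / c^L have the same probability.\<close>

lemma hid_cong:
  assumes "\<forall>p\<in>weight_index n L. W p = W' p" and "l \<le> L" and "j \<in> {1..n l}"
  shows "hid W n l x j = hid W' n l x j"
  using assms(2,3)
proof (induction l arbitrary: j)
  case (Suc l)
  have "W (Suc l, j, k) * hid W n l x k = W' (Suc l, j, k) * hid W' n l x k" if "k \<in> {1..n l}" for k
  proof -
    have "(Suc l, j, k) \<in> weight_index n L"
      using Suc.prems that by (auto simp: weight_index_def)
    then show ?thesis using assms(1) Suc.IH[of k] Suc.prems that by auto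
  qed
  then have "(\<Sum>k=1..n l. W (Suc l, j, k) * hid W n l x k) = (\<Sum>k=1..n l. W' (Suc l, j, k) * hid W' n l x k)"
    by (rule sum.cong[OF refl])
  then show ?case by simp
qed simp

lemma preact_cong:
  assumes "\<forall>p\<in>weight_index n L. W p = W' p" and "l \<in> {1..L + 1}" and "i \<in> {1..n l}"
  shows "preact W n l x i = preact W' n l x i"
proof -
  have "W (l, i, k) * hid W n (l - 1) x k = W' (l, i, k) * hid W' n (l - 1) x k"
    if "k \<in> {1..n (l - 1)}" for k
  proof -
    have "(l, i, k) \<in> weight_index n L" using assms(2,3) that by (auto simp: weight_index_def)
    then show ?thesis using assms hid_cong[OF assms(1), of "l - 1" k] that by auto
  qed
  then have "(\<Sum>k=1..n (l - 1). W (l, i, k) * hid W n (l - 1) x k)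
      = (\<Sum>k=1..n (l - 1). W' (l, i, k) * hid W' n (l - 1) x k)"
    by (rule sum.cong[OF refl])
  then show ?thesis by (simp add: preact_def)
qed

lemma bp_cong:
  assumes "\<forall>p\<in>weight_index n L. W p = W' p" and "k \<le> L" and "i \<in> {1..n (L + 1 - k)}"
  shows "bp W n L k x i = bp W' n L k x i"
  using assms(2,3)
proof (induction k arbitrary: i)
  case (Suc k)
  have "bp W n L k x m * W (L + 1 - k, m, i) = bp W' n L k x m * W' (L + 1 - k, m, i)"
    if "m \<in> {1..n (L + 1 - k)}" for m
  proof -
    have "(L + 1 - k, m, i) \<in> weight_index n L"
      using Suc.prems that by (auto simp: weight_index_def Suc_diff_le)
    then show ?thesis using assms(1) Suc.IH[of m] Suc.prems that by auto
  qed
  then have "(\<Sum>m=1..n (L + 1 - k). bp W n L k x m * W (L + 1 - k, m, i) / sqrt (real (n (L - k))))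
      = (\<Sum>m=1..n (L + 1 - k). bp W' n L k x m * W' (L + 1 - k, m, i) / sqrt (real (n (L - k))))"
    by (intro sum.cong refl) simp
  moreover have "preact W n (L - k) x i = preact W' n (L - k) x i"
    using Suc.prems by (intro preact_cong[OF assms(1)]) auto
  ultimately show ?case by (simp only: bp.simps)
qed simp

lemma grad_w_cong:
  assumes "\<forall>p\<in>weight_index n L. W p = W' p" and "p \<in> weight_index n L"
  shows "grad_w W n L x p = grad_w W' n L x p"
proof -
  obtain l i j where p: "p = (l, i, j)" by (cases p)
  have "bp W n L (L + 1 - l) x i = bp W' n L (L + 1 - l) x i"
    using assms(2) by (intro bp_cong[OF assms(1)]) (auto simp: p weight_index_def)
  moreover have "hid W n (l - 1) x j = hid W' n (l - 1) x j"
    using assms(2) by (intro hid_cong[OF assms(1)]) (auto simp: p weight_index_def)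
  ultimately show ?thesis by (simp add: grad_w_def p)
qed

lemma ntk_fin_cong:
  assumes "\<forall>p\<in>weight_index n L. W p = W' p"
  shows "ntk_fin W n L x x' = ntk_fin W' n L x x'"
  unfolding ntk_fin_def by (intro sum.cong refl) (simp add: grad_w_cong[OF assms])

lemma relu_mult_pos: "0 < a \<Longrightarrow> relu (a * t) = a * relu t"
  by (auto simp: relu_def max_def mult_le_0_iff zero_le_mult_iff)

lemma relu_deriv_mult_pos: "0 < a \<Longrightarrow> relu_deriv (a * t) = relu_deriv t"
  by (auto simp: relu_deriv_def zero_less_mult_iff)

lemma hid_scaled_weights:
  assumes "0 < s"
  shows "hid (\<lambda>p. s * W p) n l x j = s ^ l * hid W n l x j"
proof (induction l arbitrary: j)
  case (Suc l)
  have "(1 / sqrt (real (n l))) * (\<Sum>k=1..n l. (s * W (Suc l, j, k)) * hid (\<lambda>p. s * W p) n l x k)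
      = s ^ Suc l * ((1 / sqrt (real (n l))) * (\<Sum>k=1..n l. W (Suc l, j, k) * hid W n l x k))"
    by (simp add: Suc.IH sum_distrib_left mult_ac)
  then show ?case using assms by (simp only: hid.simps relu_mult_pos zero_less_power)
qed simp

text \<open>The exponent is \<open>l\<close> for \<open>l \<ge> 1\<close>; for the meaningless layer \<open>l = 0\<close>, where \<open>l - 1\<close>
  truncates, it is 1.\<close>
lemma preact_scaled_weights:
  assumes "0 < s"
  shows "preact (\<lambda>p. s * W p) n l x i = s ^ Suc (l - 1) * preact W n l x i"
  by (simp add: preact_def hid_scaled_weights[OF assms] sum_distrib_left mult_ac)

lemma bp_scaled_weights:
  assumes "0 < s"
  shows "bp (\<lambda>p. s * W p) n L k x i = s ^ k * bp W n L k x i"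
proof (induction k arbitrary: i)
  case (Suc k)
  have "relu_deriv (preact (\<lambda>p. s * W p) n (L - k) x i) = relu_deriv (preact W n (L - k) x i)"
    using assms by (simp only: preact_scaled_weights relu_deriv_mult_pos zero_less_power)
  moreover have "(\<Sum>m=1..n (L + 1 - k). bp (\<lambda>p. s * W p) n L k x m * (s * W (L + 1 - k, m, i))
        / sqrt (real (n (L - k))))
      = s ^ Suc k * (\<Sum>m=1..n (L + 1 - k). bp W n L k x m * W (L + 1 - k, m, i)
        / sqrt (real (n (L - k))))"
    by (simp add: Suc.IH sum_distrib_left mult_ac)
  ultimately show ?case by (simp only: bp.simps mult_ac)
qed simp

lemma grad_w_scaled_weights:
  assumes "0 < s" and "p \<in> weight_index n L"
  shows "grad_w (\<lambda>p. s * W p) n L x p = s ^ L * grad_w W n L x p"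
proof -
  obtain l i j where p: "p = (l, i, j)" by (cases p)
  have "L + 1 - l + (l - 1) = L" using assms(2) by (auto simp: p weight_index_def)
  then have "s ^ (L + 1 - l) * s ^ (l - 1) = s ^ L" by (metis power_add)
  then show ?thesis
    by (simp add: grad_w_def p bp_scaled_weights[OF assms(1)] hid_scaled_weights[OF assms(1)])
qed

lemma ntk_fin_scaled_weights:
  assumes "0 < s"
  shows "ntk_fin (\<lambda>p. s * W p) n L x x' = (s\<^sup>2) ^ L * ntk_fin W n L x x'"
  unfolding ntk_fin_def sum_distrib_left
  by (intro sum.cong refl)
     (simp add: grad_w_scaled_weights[OF assms] power_mult_distrib[symmetric] power2_eq_square)

lemma sets_gauss [measurable_cong]: "sets (gauss v) = sets borel"
  by (simp add: gauss_def)

lemma prob_space_gauss: "0 < v \<Longrightarrow> prob_space (gauss v)"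
  by (simp add: gauss_def prob_space_normal_density)

lemma distr_gauss_1_mult:
  assumes "0 < c"
  shows "distr (gauss 1) (gauss c) (\<lambda>x. sqrt c * x) = gauss c"
proof -
  have g1: "gauss 1 = density lborel (normal_density 0 1)" by (simp add: gauss_def)
  interpret prob_space "gauss 1" by (rule prob_space_gauss) simp
  have "distributed (gauss 1) lborel (\<lambda>x. x) (normal_density 0 1)"
    unfolding distributed_def g1 by (auto simp: distr_id2 normal_density_nonneg)
  from normal_density_affine[OF this, of "sqrt c" 0] assms
  have "distr (gauss 1) lborel (\<lambda>x. sqrt c * x) = gauss c"
    by (simp add: distributed_def gauss_def)
  moreover have "distr (gauss 1) (gauss c) (\<lambda>x. sqrt c * x) = distr (gauss 1) lborel (\<lambda>x. sqrt c * x)"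
    by (intro distr_cong) (auto simp: gauss_def)
  ultimately show ?thesis by simp
qed

lemma distr_PiM_gauss_1_mult:
  assumes "finite I" and "0 < c"
  shows "distr (PiM I (\<lambda>_. gauss 1)) (PiM I (\<lambda>_. gauss c)) (compose I (\<lambda>x. sqrt c * x))
    = PiM I (\<lambda>_. gauss c)"
  using assms
  by (simp add: distr_PiM_finite_prob_space' prob_space_gauss distr_gauss_1_mult)

lemma measurable_compose_gauss:
  assumes "h \<in> borel_measurable borel"
  shows "compose I h \<in> measurable (PiM I (\<lambda>_. gauss a)) (PiM I (\<lambda>_. gauss b))"
  unfolding compose_def using assms by measurable

text \<open>The measurable right inverse makes A measurable iff its preimage is, so the
  non-measurable case holds too (both sides are 0).\<close>
lemma measure_preserving_preimage:
  assumes f: "f \<in> M \<rightarrow>\<^sub>M N" and g: "g \<in> N \<rightarrow>\<^sub>M M" and "distr M N f = N"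
    and fg: "\<And>y. y \<in> space N \<Longrightarrow> f (g y) = y" and "A \<subseteq> space N"
  shows "measure N A = measure M (f -` A \<inter> space M)"
proof (cases "A \<in> sets N")
  case True
  then show ?thesis using measure_distr[OF f True] assms(3) by simp
next
  case False
  have "A = g -` (f -` A \<inter> space M) \<inter> space N"
    using assms(5) measurable_space[OF g] fg by auto
  then have "f -` A \<inter> space M \<notin> sets M"
    using False measurable_sets[OF g] by metis
  then show ?thesis using False by (simp add: measure_notin_sets)
qed

lemma weight_measure_const:
  assumes "\<forall>l u v. u \<in> {0..1} \<and> v \<in> {0..1} \<longrightarrow> G l u v = c"
  shows "weight_measure G n L = PiM (weight_index n L) (\<lambda>_. gauss c)"
  unfolding weight_measure_def
proof (rule PiM_cong)
  fix p assume p: "p \<in> weight_index n L"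
  obtain l i j where pe: "p = (l, i, j)" by (cases p)
  have "real i / real (n l) \<in> {0..1}" "real j / real (n (l - 1)) \<in> {0..1}"
    using p by (auto simp: pe weight_index_def)
  then show "(case p of (l, i, j) \<Rightarrow> gauss (G l (real i / real (n l)) (real j / real (n (l - 1)))))
      = gauss c"
    using assms by (simp add: pe)
qed simp

lemma finite_weight_index: "finite (weight_index n L)"
proof (rule finite_subset)
  show "weight_index n L \<subseteq> (SIGMA l:{1..L+1}. {1..n l} \<times> {1..n (l - 1)})"
    by (auto simp: weight_index_def)
qed auto

lemma measure_ntk_deviation_const_graphon:
  assumes G: "\<forall>l u v. u \<in> {0..1} \<and> v \<in> {0..1} \<longrightarrow> G l u v = c" and c: "0 < c"
  shows "measure (weight_measure G n L)
      {W \<in> space (weight_measure G n L). \<bar>ntk_fin W n L x x' - c ^ L * k\<bar> > \<epsilon>}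
    = measure (weight_measure (\<lambda>_ _ _. 1) n L)
      {W \<in> space (weight_measure (\<lambda>_ _ _. 1) n L). \<bar>ntk_fin W n L x x' - k\<bar> > \<epsilon> / c ^ L}"
proof -
  define I where "I = weight_index n L"
  define Mc where "Mc = PiM I (\<lambda>_. gauss c)"
  define M1 where "M1 = PiM I (\<lambda>_. gauss (1::real))"
  define f where "f = compose I (\<lambda>x. sqrt c * x)"
  define g where "g = compose I (\<lambda>x. x / sqrt c)"
  have f: "f \<in> M1 \<rightarrow>\<^sub>M Mc" and g: "g \<in> Mc \<rightarrow>\<^sub>M M1"
    unfolding f_def g_def M1_def Mc_def by (auto intro: measurable_compose_gauss)
  have ntk_f: "ntk_fin (f W) n L x x' = c ^ L * ntk_fin W n L x x'" for W
    using ntk_fin_cong[of n L "f W" "\<lambda>p. sqrt c * W p"] ntk_fin_scaled_weights[of "sqrt c" W] c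
    by (simp add: f_def compose_def I_def)
  have deviation_iff: "\<bar>c ^ L * a - c ^ L * k\<bar> > \<epsilon> \<longleftrightarrow> \<bar>a - k\<bar> > \<epsilon> / c ^ L" for a
  proof -
    have "\<bar>c ^ L * a - c ^ L * k\<bar> = c ^ L * \<bar>a - k\<bar>"
      using c by (simp add: abs_mult flip: right_diff_distrib)
    then show ?thesis using c by (simp add: pos_divide_less_eq mult.commute)
  qed
  have "weight_measure G n L = Mc" "weight_measure (\<lambda>_ _ _. 1) n L = M1"
    unfolding Mc_def M1_def I_def by (auto intro: weight_measure_const[OF G] weight_measure_const)
  moreover have "measure Mc {W \<in> space Mc. \<bar>ntk_fin W n L x x' - c ^ L * k\<bar> > \<epsilon>}
    = measure M1 (f -` {W \<in> space Mc. \<bar>ntk_fin W n L x x' - c ^ L * k\<bar> > \<epsilon>} \<inter> space M1)"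
  proof (rule measure_preserving_preimage[OF f g])
    show "distr M1 Mc f = Mc"
      unfolding f_def M1_def Mc_def I_def by (rule distr_PiM_gauss_1_mult[OF finite_weight_index c])
    show "f (g W) = W" if "W \<in> space Mc" for W
      using that c by (auto simp: f_def g_def compose_def Mc_def space_PiM PiE_def extensional_def)
  qed auto
  moreover have "f -` {W \<in> space Mc. \<bar>ntk_fin W n L x x' - c ^ L * k\<bar> > \<epsilon>} \<inter> space M1
      = {W \<in> space M1. \<bar>ntk_fin W n L x x' - k\<bar> > \<epsilon> / c ^ L}"
    using measurable_space[OF f] by (auto simp: ntk_f deviation_iff)
  ultimately show ?thesis by simp
qed

lemma all_pos_divide_iff:
  fixes a :: real
  assumes "0 < a"
  shows "(\<forall>\<epsilon>>0. P (\<epsilon> / a)) \<longleftrightarrow> (\<forall>\<epsilon>>0. P \<epsilon>)"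
  using assms by (metis divide_pos_pos mult_pos_pos nonzero_mult_div_cancel_right less_irrefl)

theorem mainTheorem2:
  fixes L d :: nat and c :: real and G :: "nat \<Rightarrow> real \<Rightarrow> real \<Rightarrow> real"
    and K :: "(nat \<Rightarrow> real) \<Rightarrow> (nat \<Rightarrow> real) \<Rightarrow> real"
  assumes "L \<ge> 1" and "d \<ge> 1" and "0 < c" and "c \<le> 1"
    and "\<forall>l u v. u \<in> {0..1} \<and> v \<in> {0..1} \<longrightarrow> G l u v = c"
  shows "is_limiting_ntk G d L (\<lambda>x x'. c ^ L * K x x') \<longleftrightarrow> is_limiting_ntk (\<lambda>_ _ _. 1) d L K"
  unfolding is_limiting_ntk_def measure_ntk_deviation_const_graphon[OF assms(5,3)]
  using assms(3) by (intro all_cong1 all_pos_divide_iff) simp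

end
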